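(* Let $\mathcal{K}=(\mathcal{O},\mathcal{B})$ be a $\mathcal{BALC}$ knowledge base over a finite set $V$ of discrete random variables. Then $\mathcal{K}$ is consistent if and only if for every world $\omega$ with $P_{\mathcal{B}}(\omega)>0$, the $\mathcal{ALC}$ ontology $\mathcal{O}_\omega$ is consistent.
   Context: $V$ is a finite set of random variables, each $X\in V$ with a finite set of values $\mathrm{val}(X)$. A world $\omega$ assigns to each $X\in V$ a value $\omega(X)\in\mathrm{val}(X)$. A Bayesian network (BN) $\mathcal{B}$ over $V$ consists of a directed acyclic graph on $V$ and, for each $X\in V$, conditional probability tables $P(X=x\mid \pi(X)=\vec{x})$, where $\pi(X)$ is the set of parents of $X$; it defines the joint distribution $P_{\mathcal{B}}(\omega)=\prod_{X\in V}P(X=\omega(X)\mid \pi(X)=\omega(\pi(X)))$. A $V$-literal is a pair $(X,x)$ with $X\in V$, $x\in\mathrm{val}(X)$; a (primitive) context is a set of $V$-literals; a world $\omega$ satisfies a context $\kappa$ ($\omega\models\kappa$) iff $\omega(X)=x$ for all $(X,x)\in\kappa$ (every world satisfies $\emptyset$). A $V$-axiom is an expression $\alpha^\kappa$ where $\alpha$ is an $\mathcal{ALC}$ axiom (a GCI $C\sqsubseteq D$, a concept assertion $C(a)$, or a role assertion $r(a,b)$) and $\kappa$ a context; a $V$-ontology is a finite set of $V$-axioms; a $\mathcal{BALC}$ knowledge base is a pair $(\mathcal{O},\mathcal{B})$ of a $V$-ontology and a BN over $V$. A $V$-interpretation $\mathcal{V}=(\Delta^{\mathcal V},\cdot^{\mathcal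 V},v^{\mathcal V})$ consists of a classical $\mathcal{ALC}$ interpretation $(\Delta^{\mathcal V},\cdot^{\mathcal V})$ and a world $v^{\mathcal V}$; $\mathcal V\models\alpha^\kappa$ iff $v^{\mathcal V}\not\models\kappa$ or $(\Delta^{\mathcal V},\cdot^{\mathcal V})$ satisfies $\alpha$. A probabilistic interpretation $\mathcal P=(\mathcal J,P_{\mathcal J})$ is a finite set $\mathcal J$ of $V$-interpretations with a probability distribution $P_{\mathcal J}$ on $\mathcal J$ giving every element positive probability; it is a model of $\mathcal O$ iff every $\mathcal V\in\mathcal J$ satisfies every axiom of $\mathcal O$; it is consistent with $\mathcal B$ iff for every world $\omega$, $\sum_{\mathcal V\in\mathcal J,\,v^{\mathcal V}=\omega}P_{\mathcal J}(\mathcal V)=P_{\mathcal B}(\omega)$; it is a model of $\mathcal K=(\mathcal O,\mathcal B)$ iff both hold. $\mathcal K$ is consistent iff it has a model. The restriction of $\mathcal O$ to a world $\omega$ is the $\mathcal{ALC}$ ontology $\mathcal{O}_\omega=\{\alpha\mid \alpha^\kappa\in\mathcal O,\ \omega\models\kappa\}$; an $\mathcal{ALC}$ ontology is consistent iff it has a (classical) model. *)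

theory Defs
  imports Complex_Main "HOL-Library.FuncSet"
begin

datatype ('c, 'r) concept =
    Top
  | Bot
  | CName 'c
  | Neg "('c, 'r) concept"
  | Conj "('c, 'r) concept" "('c, 'r) concept"
  | Disj "('c, 'r) concept" "('c, 'r) concept"
  | Ex 'r "('c, 'r) concept"
  | All 'r "('c, 'r) concept"

datatype ('c, 'r, 'i) axiom =
    GCI "('c, 'r) concept" "('c, 'r) concept"
  | CAssert "('c, 'r) concept" 'i
  | RAssert 'r 'i 'i

record ('d, 'c, 'r, 'i) interp =
  dom :: "'d set"
  cn  :: "'c \<Rightarrow> 'd set"
  rn  :: "'r \<Rightarrow> ('d \<times> 'd) set"
  ind :: "'i \<Rightarrow> 'd"

definition wf_interp :: "('d, 'c, 'r, 'i) interp \<Rightarrow> bool" where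
  "wf_interp I \<longleftrightarrow> dom I \<noteq> {} \<and> (\<forall>c. cn I c \<subseteq> dom I)
     \<and> (\<forall>r. rn I r \<subseteq> dom I \<times> dom I) \<and> (\<forall>a. ind I a \<in> dom I)"

fun ext :: "('d, 'c, 'r, 'i) interp \<Rightarrow> ('c, 'r) concept \<Rightarrow> 'd set" where
  "ext I Top = dom I"
| "ext I Bot = {}"
| "ext I (CName c) = cn I c"
| "ext I (Neg C) = dom I - ext I C"
| "ext I (Conj C D) = ext I C \<inter> ext I D"
| "ext I (Disj C D) = ext I C \<union> ext I D"
| "ext I (Ex r C) = {d \<in> dom I. \<exists>e. (d, e) \<in> rn I r \<and> e \<in> ext I C}"
| "ext I (All r C) = {d \<in> dom I. \<forall>e. (d, e) \<in> rn I r \<longrightarrow> e \<in> ext I C}"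

fun sat_axiom :: "('d, 'c, 'r, 'i) interp \<Rightarrow> ('c, 'r, 'i) axiom \<Rightarrow> bool" where
  "sat_axiom I (GCI C D) \<longleftrightarrow> ext I C \<subseteq> ext I D"
| "sat_axiom I (CAssert C a) \<longleftrightarrow> ind I a \<in> ext I C"
| "sat_axiom I (RAssert r a b) \<longleftrightarrow> (ind I a, ind I b) \<in> rn I r"

definition ALC_consistent :: "'d itself \<Rightarrow> ('c, 'r, 'i) axiom set \<Rightarrow> bool" where
  "ALC_consistent (_ :: 'd itself) Ont \<longleftrightarrow>
     (\<exists>I :: ('d, 'c, 'r, 'i) interp. wf_interp I \<and> (\<forall>\<alpha>\<in>Ont. sat_axiom I \<alpha>))"

text \<open>Worlds over V: assignments of a value in val X to each X in V (extensional outside V).\<close>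
definition worlds :: "'v set \<Rightarrow> ('v \<Rightarrow> 'x set) \<Rightarrow> ('v \<Rightarrow> 'x) set" where
  "worlds V val = PiE V val"

definition sat_ctx :: "('v \<Rightarrow> 'x) \<Rightarrow> ('v \<times> 'x) set \<Rightarrow> bool" where
  "sat_ctx \<omega> \<kappa> \<longleftrightarrow> (\<forall>(X, x) \<in> \<kappa>. \<omega> X = x)"

definition is_context :: "'v set \<Rightarrow> ('v \<Rightarrow> 'x set) \<Rightarrow> ('v \<times> 'x) set \<Rightarrow> bool" where
  "is_context V val \<kappa> \<longleftrightarrow> (\<forall>(X, x) \<in> \<kappa>. X \<in> V \<and> x \<in> val X)"

text \<open>A Bayesian network over V: parent function par (a DAG on V) and conditional
  probability tables cpt X x \<rho> = P(X = x | \<pi>(X) = \<rho>), \<rho> an assignment to the parents.\<close>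
definition is_BN :: "'v set \<Rightarrow> ('v \<Rightarrow> 'x set) \<Rightarrow> ('v \<Rightarrow> 'v set)
                     \<Rightarrow> ('v \<Rightarrow> 'x \<Rightarrow> ('v \<Rightarrow> 'x) \<Rightarrow> real) \<Rightarrow> bool" where
  "is_BN V val par cpt \<longleftrightarrow>
     finite V \<and> (\<forall>X\<in>V. finite (val X) \<and> val X \<noteq> {})
     \<and> (\<forall>X\<in>V. par X \<subseteq> V)
     \<and> acyclic {(Y, X). X \<in> V \<and> Y \<in> par X}
     \<and> (\<forall>X\<in>V. \<forall>\<rho>\<in>PiE (par X) val.
           (\<forall>x\<in>val X. cpt X x \<rho> \<ge> 0) \<and> (\<Sum>x\<in>val X. cpt X x \<rho>) = 1)"

definition P_BN :: "'v set \<Rightarrow> ('v \<Rightarrow> 'v set) \<Rightarrow> ('v \<Rightarrow> 'x \<Rightarrow> ('v \<Rightarrow> 'x) \<Rightarrow> real)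
                    \<Rightarrow> ('v \<Rightarrow> 'x) \<Rightarrow> real" where
  "P_BN V par cpt \<omega> = (\<Prod>X\<in>V. cpt X (\<omega> X) (restrict \<omega> (par X)))"

definition is_V_ontology :: "'v set \<Rightarrow> ('v \<Rightarrow> 'x set)
      \<Rightarrow> (('c, 'r, 'i) axiom \<times> ('v \<times> 'x) set) set \<Rightarrow> bool" where
  "is_V_ontology V val Ont \<longleftrightarrow> finite Ont \<and> (\<forall>(\<alpha>, \<kappa>) \<in> Ont. is_context V val \<kappa>)"

definition restrict_ont :: "(('c, 'r, 'i) axiom \<times> ('v \<times> 'x) set) set \<Rightarrow> ('v \<Rightarrow> 'x)
      \<Rightarrow> ('c, 'r, 'i) axiom set" where
  "restrict_ont Ont \<omega> = {\<alpha>. \<exists>\<kappa>. (\<alpha>, \<kappa>) \<in> Ont \<and> sat_ctx \<omega> \<kappa>}"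

text \<open>A V-interpretation is a pair (I, v) of a classical interpretation and a world.\<close>
definition sat_V_axiom :: "('d, 'c, 'r, 'i) interp \<times> ('v \<Rightarrow> 'x)
      \<Rightarrow> ('c, 'r, 'i) axiom \<times> ('v \<times> 'x) set \<Rightarrow> bool" where
  "sat_V_axiom \<V> ax \<longleftrightarrow> \<not> sat_ctx (snd \<V>) (snd ax) \<or> sat_axiom (fst \<V>) (fst ax)"

definition is_prob_interp :: "'v set \<Rightarrow> ('v \<Rightarrow> 'x set)
      \<Rightarrow> (('d, 'c, 'r, 'i) interp \<times> ('v \<Rightarrow> 'x)) set
      \<Rightarrow> (('d, 'c, 'r, 'i) interp \<times> ('v \<Rightarrow> 'x) \<Rightarrow> real) \<Rightarrow> bool" where
  "is_prob_interp V val J PJ \<longleftrightarrow> finite J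
     \<and> (\<forall>\<V>\<in>J. wf_interp (fst \<V>) \<and> snd \<V> \<in> worlds V val \<and> PJ \<V> > 0)
     \<and> (\<Sum>\<V>\<in>J. PJ \<V>) = 1"

definition is_model_BALC :: "'v set \<Rightarrow> ('v \<Rightarrow> 'x set) \<Rightarrow> ('v \<Rightarrow> 'v set)
      \<Rightarrow> ('v \<Rightarrow> 'x \<Rightarrow> ('v \<Rightarrow> 'x) \<Rightarrow> real)
      \<Rightarrow> (('c, 'r, 'i) axiom \<times> ('v \<times> 'x) set) set
      \<Rightarrow> (('d, 'c, 'r, 'i) interp \<times> ('v \<Rightarrow> 'x)) set
      \<Rightarrow> (('d, 'c, 'r, 'i) interp \<times> ('v \<Rightarrow> 'x) \<Rightarrow> real) \<Rightarrow> bool" where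
  "is_model_BALC V val par cpt Ont J PJ \<longleftrightarrow>
     is_prob_interp V val J PJ
     \<and> (\<forall>\<V>\<in>J. \<forall>ax\<in>Ont. sat_V_axiom \<V> ax)
     \<and> (\<forall>\<omega>\<in>worlds V val. (\<Sum>\<V>\<in>{\<V>\<in>J. snd \<V> = \<omega>}. PJ \<V>) = P_BN V par cpt \<omega>)"

definition BALC_consistent :: "'d itself \<Rightarrow> 'v set \<Rightarrow> ('v \<Rightarrow> 'x set) \<Rightarrow> ('v \<Rightarrow> 'v set)
      \<Rightarrow> ('v \<Rightarrow> 'x \<Rightarrow> ('v \<Rightarrow> 'x) \<Rightarrow> real)
      \<Rightarrow> (('c, 'r, 'i) axiom \<times> ('v \<times> 'x) set) set \<Rightarrow> bool" where
  "BALC_consistent (_ :: 'd itself) V val par cpt Ont \<longleftrightarrow>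
     (\<exists>(J :: (('d, 'c, 'r, 'i) interp \<times> ('v \<Rightarrow> 'x)) set) PJ.
        is_model_BALC V val par cpt Ont J PJ)"

end

theory Submission
  imports Defs
begin

text \<open>
  A model of the knowledge base can only put mass on a world \<open>\<omega>\<close> through V-interpretations
  \<open>(I, \<omega>)\<close>, and such an \<open>I\<close> is a classical model of \<open>O\<^sub>\<omega>\<close>; so every world of positive
  probability has a consistent restriction. Conversely, choosing one model \<open>I\<^sub>\<omega>\<close> of \<open>O\<^sub>\<omega>\<close>
  for each world of positive probability and giving \<open>(I\<^sub>\<omega>, \<omega>)\<close> the weight \<open>P\<^sub>B(\<omega>)\<close> yields
  a model, since the weights of a Bayesian network sum to one. The latter is proved by
  induction on the number of variables, removing a variable that is nobody's parent and
  summing out its conditional probability table.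
\<close>

lemma is_BN_ex_leaf:
  assumes "is_BN V val par cpt" "V \<noteq> {}"
  shows "\<exists>X\<in>V. \<forall>Y\<in>V. X \<notin> par Y"
proof -
  let ?R = "{(Y, X). X \<in> V \<and> Y \<in> par X}"
  have "finite ?R"
  proof (rule finite_subset)
    show "?R \<subseteq> V \<times> V" and "finite (V \<times> V)"
      using assms(1) unfolding is_BN_def by auto
  qed
  moreover have "acyclic ?R"
    using assms(1) unfolding is_BN_def by simp
  ultimately have "wf (?R\<inverse>)"
    by (rule finite_acyclic_wf_converse)
  then obtain X where "X \<in> V" and minimal: "\<And>Y. (Y, X) \<in> ?R\<inverse> \<Longrightarrow> Y \<notin> V"
    using assms(2) by (rule wfE_min') (rule that)
  have "X \<notin> par Y" if "Y \<in> V" for Y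
  proof
    assume "X \<in> par Y"
    with \<open>Y \<in> V\<close> have "(Y, X) \<in> ?R\<inverse>" by simp
    with \<open>Y \<in> V\<close> show False using minimal by blast
  qed
  with \<open>X \<in> V\<close> show ?thesis by blast
qed

lemma is_BN_Diff_leaf:
  assumes BN: "is_BN V val par cpt" and leaf: "\<forall>Y\<in>V. X \<notin> par Y"
  shows "is_BN (V - {X}) val par cpt"
proof -
  from BN have "finite V" and "\<forall>Z\<in>V. par Z \<subseteq> V"
    and "acyclic {(Y, Z). Z \<in> V \<and> Y \<in> par Z}"
    unfolding is_BN_def by simp_all
  moreover have "{(Y, Z). Z \<in> V - {X} \<and> Y \<in> par Z} \<subseteq> {(Y, Z). Z \<in> V \<and> Y \<in> par Z}"
    by auto
  ultimately have "finite (V - {X})" and "\<forall>Z\<in>V - {X}. par Z \<subseteq> V - {X}"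
    and "acyclic {(Y, Z). Z \<in> V - {X} \<and> Y \<in> par Z}"
    using leaf acyclic_subset by auto
  with BN show ?thesis
    unfolding is_BN_def by simp
qed

lemma P_BN_fun_upd_leaf:
  assumes "finite V" "X \<in> V" "\<forall>Y\<in>V. X \<notin> par Y"
  shows "P_BN V par cpt (g(X := y)) = cpt X y (restrict g (par X)) * P_BN (V - {X}) par cpt g"
proof -
  have restrict_upd: "restrict (g(X := y)) (par Y) = restrict g (par Y)" if "Y \<in> V" for Y
    using assms(3) that by (auto simp: restrict_def)
  have "P_BN V par cpt (g(X := y))
      = cpt X y (restrict (g(X := y)) (par X)) * P_BN (V - {X}) par cpt (g(X := y))"
    unfolding P_BN_def using assms(1,2) by (simp add: prod.remove)
  also have "P_BN (V - {X}) par cpt (g(X := y)) = P_BN (V - {X}) par cpt g"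
    unfolding P_BN_def using restrict_upd by (intro prod.cong) auto
  finally show ?thesis
    by (simp only: restrict_upd[OF assms(2)])
qed

lemma sum_PiE_insert:
  assumes "X \<notin> S"
  shows "(\<Sum>\<omega>\<in>PiE (insert X S) T. f \<omega>) = (\<Sum>g\<in>PiE S T. \<Sum>y\<in>T X. f (g(X := y)))"
proof -
  have "(\<Sum>\<omega>\<in>PiE (insert X S) T. f \<omega>) = (\<Sum>(y, g)\<in>T X \<times> PiE S T. f (g(X := y)))"
    unfolding PiE_insert_eq by (subst sum.reindex[OF inj_combinator[OF assms]]) (simp add: case_prod_unfold)
  also have "\<dots> = (\<Sum>y\<in>T X. \<Sum>g\<in>PiE S T. f (g(X := y)))"
    by (rule sum.cartesian_product[symmetric])
  finally show ?thesis
    by (simp add: sum.swap[of _ "T X"])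
qed

lemma sum_P_BN_eq_1:
  assumes "is_BN V val par cpt"
  shows "(\<Sum>\<omega>\<in>worlds V val. P_BN V par cpt \<omega>) = 1"
  using assms
proof (induction "card V" arbitrary: V)
  case 0
  then have "V = {}" unfolding is_BN_def by auto
  then show ?case by (simp add: P_BN_def worlds_def)
next
  case (Suc n)
  have "finite V" using Suc.prems unfolding is_BN_def by auto
  with Suc.hyps(2) have "V \<noteq> {}" by auto
  then obtain X where X: "X \<in> V" "\<forall>Y\<in>V. X \<notin> par Y"
    using is_BN_ex_leaf[OF Suc.prems] by blast
  have "n = card (V - {X})"
    using Suc.hyps(2) X(1) \<open>finite V\<close> by simp
  note IH = Suc.hyps(1)[OF this is_BN_Diff_leaf[OF Suc.prems X(2)]]
  have cpt_sum: "(\<Sum>y\<in>val X. cpt X y (restrict g (par X))) = 1" if "g \<in> worlds (V - {X}) val" for g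
  proof -
    have "par X \<subseteq> V - {X}" using Suc.prems X unfolding is_BN_def by auto
    with that have "restrict g (par X) \<in> PiE (par X) val" by (auto simp: worlds_def)
    then show ?thesis using Suc.prems X(1) unfolding is_BN_def by auto
  qed
  have "(\<Sum>\<omega>\<in>worlds V val. P_BN V par cpt \<omega>)
      = (\<Sum>\<omega>\<in>PiE (insert X (V - {X})) val. P_BN V par cpt \<omega>)"
    by (simp add: worlds_def insert_absorb[OF X(1)])
  also have "\<dots> = (\<Sum>g\<in>worlds (V - {X}) val. \<Sum>y\<in>val X. P_BN V par cpt (g(X := y)))"
    unfolding worlds_def by (rule sum_PiE_insert) simp
  also have "\<dots> = (\<Sum>g\<in>worlds (V - {X}) val.
                    (\<Sum>y\<in>val X. cpt X y (restrict g (par X))) * P_BN (V - {X}) par cpt g)"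
    by (simp add: P_BN_fun_upd_leaf[OF \<open>finite V\<close> X] sum_distrib_right)
  also have "\<dots> = (\<Sum>g\<in>worlds (V - {X}) val. P_BN (V - {X}) par cpt g)"
    by (rule sum.cong) (simp_all add: cpt_sum)
  finally show ?case
    using IH by simp
qed

lemma P_BN_nonneg:
  assumes "is_BN V val par cpt" "\<omega> \<in> worlds V val"
  shows "P_BN V par cpt \<omega> \<ge> 0"
  unfolding P_BN_def
proof (rule prod_nonneg)
  fix X assume "X \<in> V"
  with assms have "restrict \<omega> (par X) \<in> PiE (par X) val" and "\<omega> X \<in> val X"
    unfolding is_BN_def worlds_def by (auto simp: PiE_iff)
  with assms(1) \<open>X \<in> V\<close> show "cpt X (\<omega> X) (restrict \<omega> (par X)) \<ge> 0"
    unfolding is_BN_def by auto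
qed

lemma sat_V_axioms_iff_restrict_ont:
  "(\<forall>ax\<in>Ont. sat_V_axiom (I, \<omega>) ax) \<longleftrightarrow> (\<forall>\<alpha>\<in>restrict_ont Ont \<omega>. sat_axiom I \<alpha>)"
  unfolding sat_V_axiom_def restrict_ont_def by fastforce

lemma is_model_BALC_ex_interp:
  assumes "is_model_BALC V val par cpt Ont J PJ" "\<omega> \<in> worlds V val" "P_BN V par cpt \<omega> > 0"
  shows "\<exists>I. (I, \<omega>) \<in> J"
proof -
  from assms have "(\<Sum>\<V>\<in>{\<V>\<in>J. snd \<V> = \<omega>}. PJ \<V>) \<noteq> 0"
    unfolding is_model_BALC_def by auto
  then obtain \<V> where "\<V> \<in> J" "snd \<V> = \<omega>"
    by (metis (mono_tags, lifting) empty_Collect_eq sum.empty)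
  then show ?thesis
    by (metis prod.collapse)
qed

lemma ALC_consistent_restrict_ont_if_model:
  fixes J :: "(('d, 'c, 'r, 'i) interp \<times> ('v \<Rightarrow> 'x)) set"
  assumes model: "is_model_BALC V val par cpt Ont J PJ"
    and "\<omega> \<in> worlds V val" "P_BN V par cpt \<omega> > 0"
  shows "ALC_consistent TYPE('d) (restrict_ont Ont \<omega>)"
proof -
  obtain I where "(I, \<omega>) \<in> J"
    using is_model_BALC_ex_interp[OF assms] by blast
  with model have "wf_interp I" and "\<forall>ax\<in>Ont. sat_V_axiom (I, \<omega>) ax"
    unfolding is_model_BALC_def is_prob_interp_def by auto
  then show ?thesis
    unfolding ALC_consistent_def sat_V_axioms_iff_restrict_ont by blast
qed

lemma is_model_BALC_graph:
  fixes V :: "'v set" and val :: "'v \<Rightarrow> 'x set" and par :: "'v \<Rightarrow> 'v set"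
    and cpt :: "'v \<Rightarrow> 'x \<Rightarrow> ('v \<Rightarrow> 'x) \<Rightarrow> real"
    and Im :: "('v \<Rightarrow> 'x) \<Rightarrow> ('d, 'c, 'r, 'i) interp"
  defines "W \<equiv> {\<omega>\<in>worlds V val. P_BN V par cpt \<omega> > 0}"
  assumes BN: "is_BN V val par cpt"
    and Im: "\<And>\<omega>. \<omega> \<in> W \<Longrightarrow> wf_interp (Im \<omega>) \<and> (\<forall>\<alpha>\<in>restrict_ont Ont \<omega>. sat_axiom (Im \<omega>) \<alpha>)"
  shows "is_model_BALC V val par cpt Ont ((\<lambda>\<omega>. (Im \<omega>, \<omega>)) ` W) (P_BN V par cpt \<circ> snd)"
proof -
  let ?J = "(\<lambda>\<omega>. (Im \<omega>, \<omega>)) ` W"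
  have "finite (worlds V val)"
    using BN unfolding is_BN_def worlds_def by (auto intro: finite_PiE)
  have nonneg: "\<And>\<omega>. \<omega> \<in> worlds V val \<Longrightarrow> P_BN V par cpt \<omega> \<ge> 0"
    using P_BN_nonneg[OF BN] .
  have "(\<Sum>\<V>\<in>?J. (P_BN V par cpt \<circ> snd) \<V>) = (\<Sum>\<omega>\<in>W. P_BN V par cpt \<omega>)"
    by (subst sum.reindex) (auto intro: inj_onI)
  also have "\<dots> = (\<Sum>\<omega>\<in>worlds V val. P_BN V par cpt \<omega>)"
    unfolding W_def using \<open>finite (worlds V val)\<close> nonneg
    by (intro sum.mono_neutral_left) force+
  also have "\<dots> = 1"
    using sum_P_BN_eq_1[OF BN] .
  finally have total: "(\<Sum>\<V>\<in>?J. (P_BN V par cpt \<circ> snd) \<V>) = 1" .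
  have marginal: "\<forall>\<omega>\<in>worlds V val.
      (\<Sum>\<V>\<in>{\<V>\<in>?J. snd \<V> = \<omega>}. (P_BN V par cpt \<circ> snd) \<V>) = P_BN V par cpt \<omega>"
  proof (intro ballI)
    fix \<omega> assume \<omega>: "\<omega> \<in> worlds V val"
    show "(\<Sum>\<V>\<in>{\<V>\<in>?J. snd \<V> = \<omega>}. (P_BN V par cpt \<circ> snd) \<V>) = P_BN V par cpt \<omega>"
    proof (cases "\<omega> \<in> W")
      case True
      then have "{\<V>\<in>?J. snd \<V> = \<omega>} = {(Im \<omega>, \<omega>)}" by auto
      then show ?thesis by simp
    next
      case False
      then have "{\<V>\<in>?J. snd \<V> = \<omega>} = {}" and "P_BN V par cpt \<omega> = 0"
        using \<omega> nonneg[OF \<omega>] unfolding W_def by auto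
      then show ?thesis by simp
    qed
  qed
  have "finite ?J"
    unfolding W_def using \<open>finite (worlds V val)\<close> by simp
  moreover have "\<forall>\<V>\<in>?J. wf_interp (fst \<V>) \<and> snd \<V> \<in> worlds V val \<and> (P_BN V par cpt \<circ> snd) \<V> > 0"
    using Im unfolding W_def by auto
  moreover have "\<forall>\<V>\<in>?J. \<forall>ax\<in>Ont. sat_V_axiom \<V> ax"
  proof
    fix \<V> assume "\<V> \<in> ?J"
    then obtain \<omega> where "\<omega> \<in> W" "\<V> = (Im \<omega>, \<omega>)" by blast
    then show "\<forall>ax\<in>Ont. sat_V_axiom \<V> ax"
      using Im by (simp add: sat_V_axioms_iff_restrict_ont)
  qed
  ultimately show ?thesis
    unfolding is_model_BALC_def is_prob_interp_def using total marginal by (intro conjI)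
qed

theorem mainTheorem1:
  fixes V :: "'v set" and val :: "'v \<Rightarrow> 'x set" and par :: "'v \<Rightarrow> 'v set"
    and cpt :: "'v \<Rightarrow> 'x \<Rightarrow> ('v \<Rightarrow> 'x) \<Rightarrow> real"
    and Ont :: "(('c, 'r, 'i) axiom \<times> ('v \<times> 'x) set) set"
  assumes "is_BN V val par cpt"
    and "is_V_ontology V val Ont"
  shows "BALC_consistent TYPE('d) V val par cpt Ont \<longleftrightarrow>
         (\<forall>\<omega>\<in>worlds V val. P_BN V par cpt \<omega> > 0 \<longrightarrow>
            ALC_consistent TYPE('d) (restrict_ont Ont \<omega>))"
proof
  assume "BALC_consistent TYPE('d) V val par cpt Ont"
  then obtain J :: "(('d, 'c, 'r, 'i) interp \<times> ('v \<Rightarrow> 'x)) set" and PJ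
    where "is_model_BALC V val par cpt Ont J PJ"
    unfolding BALC_consistent_def by blast
  then show "\<forall>\<omega>\<in>worlds V val. P_BN V par cpt \<omega> > 0 \<longrightarrow> ALC_consistent TYPE('d) (restrict_ont Ont \<omega>)"
    using ALC_consistent_restrict_ont_if_model by blast
next
  let ?W = "{\<omega>\<in>worlds V val. P_BN V par cpt \<omega> > 0}"
  assume "\<forall>\<omega>\<in>worlds V val. P_BN V par cpt \<omega> > 0 \<longrightarrow> ALC_consistent TYPE('d) (restrict_ont Ont \<omega>)"
  then have models: "\<forall>\<omega>\<in>?W. \<exists>I :: ('d, 'c, 'r, 'i) interp.
               wf_interp I \<and> (\<forall>\<alpha>\<in>restrict_ont Ont \<omega>. sat_axiom I \<alpha>)"
    unfolding ALC_consistent_def by blast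
  obtain Im :: "('v \<Rightarrow> 'x) \<Rightarrow> ('d, 'c, 'r, 'i) interp"
    where "\<forall>\<omega>\<in>?W. wf_interp (Im \<omega>) \<and> (\<forall>\<alpha>\<in>restrict_ont Ont \<omega>. sat_axiom (Im \<omega>) \<alpha>)"
    using bchoice[OF models] by blast
  then have "is_model_BALC V val par cpt Ont ((\<lambda>\<omega>. (Im \<omega>, \<omega>)) ` ?W) (P_BN V par cpt \<circ> snd)"
    using is_model_BALC_graph[OF assms(1)] by blast
  then show "BALC_consistent TYPE('d) V val par cpt Ont"
    unfolding BALC_consistent_def by (intro exI)
qed

end
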